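(* Let $(\mathcal S,\mathcal A,P,R,d_0)$ be a finite episodic MDP with horizon $T$ and let $\pi_\theta$ be a policy differentiable in $\theta\in\mathbb R^n$, as described in the context. Then for every $\gamma\in[0,1]$, $$\nabla J(\theta)=\sum_{s\in\mathcal S} d^{\pi_\theta}_\gamma(s)\,\frac{\partial}{\partial\theta}V^{\pi_\theta}_\gamma(s)+\sum_{s\in\mathcal S}V^{\pi_\theta}_\gamma(s)\,\frac{\partial}{\partial\theta}d^{\pi_\theta}_\gamma(s).$$
   Context: Setting: $\mathcal S$ is a finite set of states, $\mathcal A$ a finite set of actions, $P(s'\mid s,a)$ a transition function, $R(\cdot\mid s,a,s')$ a reward distribution supported in $[-R_{\max},R_{\max}]$, and $d_0$ an initial state distribution. There is a special terminal absorbing state: once entered, the agent remains there and receives reward $0$. An episode runs as follows: $S_0\sim d_0$; at each time $t$, $A_t\sim\pi_\theta(\cdot\mid S_t)$, $S_{t+1}\sim P(\cdot\mid S_t,A_t)$, $R_t\sim R(\cdot\mid S_t,A_t,S_{t+1})$. The horizon $T$ is fixed and $S_T$ is the terminal absorbing state. The policy probabilities $\pi_\theta(a\mid s)$ are differentiable in $\theta\in\mathbb R^n$. All probabilities and expectations are under $\pi=\pi_\theta$. The objective is $J(\theta)=\mathbb E\big[\sum_{t=0}^{T-1}R_t\big]$. For $\gamma\in[0,1]$ (with $0^0=1$), $V^{\pi_\theta}_\gamma(s)=\mathbb E\big[\sum_{i=t}^{T}\gamma^{i-t}R_i\,\big|\,S_t=s\big]$, treated as a function of $s$ alone (the conditional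 expectation is assumed not to depend on $t$, e.g. because time is encoded in the state), with value $0$ at the terminal state. Define $d^{\pi_\theta}_\gamma(s)=d_0(s)+(1-\gamma)\sum_{t=1}^{T-1}\Pr(S_t=s)$. *)

theory Defs
  imports "HOL-Analysis.Analysis" "HOL-Probability.Probability"
begin

text \<open>Finite episodic MDP with a fixed policy (pol = \<pi>_\<theta> for a fixed \<theta>).
  Trajectories up to time t: states ss 0 .. ss t, actions as 0 .. as (t-1).\<close>

definition traj_prob :: "('s \<Rightarrow> real) \<Rightarrow> ('s \<Rightarrow> 'a \<Rightarrow> 's \<Rightarrow> real) \<Rightarrow> ('s \<Rightarrow> 'a \<Rightarrow> real)
    \<Rightarrow> nat \<Rightarrow> (nat \<Rightarrow> 's) \<Rightarrow> (nat \<Rightarrow> 'a) \<Rightarrow> real" where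
  "traj_prob d0 P pol t ss as =
     d0 (ss 0) * (\<Prod>i<t. pol (ss i) (as i) * P (ss i) (as i) (ss (Suc i)))"

definition traj_expect :: "('s \<Rightarrow> real) \<Rightarrow> ('s \<Rightarrow> 'a \<Rightarrow> 's \<Rightarrow> real) \<Rightarrow> ('s \<Rightarrow> 'a \<Rightarrow> real)
    \<Rightarrow> nat \<Rightarrow> ((nat \<Rightarrow> 's) \<Rightarrow> (nat \<Rightarrow> 'a) \<Rightarrow> real) \<Rightarrow> real" where
  "traj_expect d0 P pol t g =
     (\<Sum>ss\<in>PiE {..t} (\<lambda>_. UNIV). \<Sum>as\<in>PiE {..<t} (\<lambda>_. UNIV). traj_prob d0 P pol t ss as * g ss as)"

definition mean_reward :: "('s \<Rightarrow> 'a \<Rightarrow> 's \<Rightarrow> real pmf) \<Rightarrow> 's \<Rightarrow> 'a \<Rightarrow> 's \<Rightarrow> real" where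
  "mean_reward R s a s' = measure_pmf.expectation (R s a s') (\<lambda>r. r)"

definition state_prob :: "('s \<Rightarrow> real) \<Rightarrow> ('s \<Rightarrow> 'a \<Rightarrow> 's \<Rightarrow> real) \<Rightarrow> ('s \<Rightarrow> 'a \<Rightarrow> real)
    \<Rightarrow> nat \<Rightarrow> 's \<Rightarrow> real" where
  "state_prob d0 P pol t s = traj_expect d0 P pol t (\<lambda>ss as. if ss t = s then 1 else 0)"

text \<open>J = E[sum_{t<T} R_t]; E[R_t] needs the trajectory up to time t+1.\<close>
definition objective :: "('s \<Rightarrow> real) \<Rightarrow> ('s \<Rightarrow> 'a \<Rightarrow> 's \<Rightarrow> real) \<Rightarrow> ('s \<Rightarrow> 'a \<Rightarrow> 's \<Rightarrow> real pmf)
    \<Rightarrow> ('s \<Rightarrow> 'a \<Rightarrow> real) \<Rightarrow> nat \<Rightarrow> real" where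
  "objective d0 P R pol T =
     (\<Sum>t<T. traj_expect d0 P pol (Suc t) (\<lambda>ss as. mean_reward R (ss t) (as t) (ss (Suc t))))"

definition cond_return :: "('s \<Rightarrow> real) \<Rightarrow> ('s \<Rightarrow> 'a \<Rightarrow> 's \<Rightarrow> real) \<Rightarrow> ('s \<Rightarrow> 'a \<Rightarrow> 's \<Rightarrow> real pmf)
    \<Rightarrow> ('s \<Rightarrow> 'a \<Rightarrow> real) \<Rightarrow> nat \<Rightarrow> real \<Rightarrow> nat \<Rightarrow> 's \<Rightarrow> real" where
  "cond_return d0 P R pol T \<gamma> t s =
     traj_expect d0 P pol (Suc T)
       (\<lambda>ss as. (if ss t = s then 1 else 0) *
          (\<Sum>i=t..T. \<gamma> ^ (i - t) * mean_reward R (ss i) (as i) (ss (Suc i))))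
     / state_prob d0 P pol t s"

definition disc_visit :: "('s \<Rightarrow> real) \<Rightarrow> ('s \<Rightarrow> 'a \<Rightarrow> 's \<Rightarrow> real) \<Rightarrow> ('s \<Rightarrow> 'a \<Rightarrow> real)
    \<Rightarrow> nat \<Rightarrow> real \<Rightarrow> 's \<Rightarrow> real" where
  "disc_visit d0 P pol T \<gamma> s = d0 s + (1 - \<gamma>) * (\<Sum>t\<in>{1..<T}. state_prob d0 P pol t s)"

end

theory Submission
  imports Defs
begin

text \<open>
  The gradient formula is the product rule applied to the identity
  \<open>J = (\<Sum>s. d\<^sub>\<gamma>(s) * V\<^sub>\<gamma>(s))\<close>, which holds for every \<theta>.
  To see the identity, note that \<open>\<Sum>s. Pr(S\<^sub>t = s) * V\<^sub>\<gamma>(s)\<close> is the expected discounted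
  return from time \<open>t\<close>, \<open>H\<^sub>t = (\<Sum>i=t..T. \<gamma>^(i-t) * E[R\<^sub>i])\<close>; the value of \<open>V\<^sub>\<gamma>\<close> on
  states of probability zero at time \<open>t\<close> does not matter. Since \<open>E[R\<^sub>t] = H\<^sub>t - \<gamma> * H\<^sub>t\<^sub>+\<^sub>1\<close>,
  the objective telescopes to \<open>H\<^sub>0 + (1 - \<gamma>) * (\<Sum>t=1..<T. H\<^sub>t)\<close>, as no reward is collected
  at the horizon \<open>T\<close>, where the chain sits in the absorbing state.
\<close>

lemma sum_PiE_UNIV_insert:
  fixes F :: "('i \<Rightarrow> 'b::finite) \<Rightarrow> 'c::comm_monoid_add"
  assumes "x \<notin> S"
  shows "(\<Sum>f\<in>PiE (insert x S) (\<lambda>_. UNIV). F f) = (\<Sum>f\<in>PiE S (\<lambda>_. UNIV). \<Sum>y\<in>UNIV. F (f(x := y)))"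
proof -
  have "(\<Sum>f\<in>PiE (insert x S) (\<lambda>_. UNIV). F f) = (\<Sum>(y, f)\<in>UNIV \<times> PiE S (\<lambda>_. UNIV). F (f(x := y)))"
    unfolding PiE_insert_eq
    by (subst sum.reindex) (use inj_combinator[OF assms, of "\<lambda>_. UNIV"] in \<open>auto simp: case_prod_beta\<close>)
  also have "\<dots> = (\<Sum>f\<in>PiE S (\<lambda>_. UNIV). \<Sum>y\<in>UNIV. F (f(x := y)))"
    by (simp add: sum.cartesian_product[symmetric] sum.swap[of _ UNIV])
  finally show ?thesis .
qed

lemma differentiable_prod:
  fixes f :: "'i \<Rightarrow> 'x::real_normed_vector \<Rightarrow> 'b::real_normed_field"
  assumes "finite I" "\<And>i. i \<in> I \<Longrightarrow> f i differentiable (at x)"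
  shows "(\<lambda>x. \<Prod>i\<in>I. f i x) differentiable (at x)"
  using assms by (induction I rule: finite_induct) auto

lemma sum_discounted_tails:
  fixes \<rho> :: "nat \<Rightarrow> 'a::comm_ring_1" and \<gamma> :: 'a
  assumes "\<rho> T = 0"
  shows "(\<Sum>i=0..T. \<gamma>^i * \<rho> i) + (1 - \<gamma>) * (\<Sum>t\<in>{1..<T}. \<Sum>i=t..T. \<gamma>^(i-t) * \<rho> i) = (\<Sum>t<T. \<rho> t)"
proof (cases T)
  case 0
  then show ?thesis using assms by simp
next
  case (Suc k)
  define H where "H t = (\<Sum>i=t..T. \<gamma>^(i-t) * \<rho> i)" for t
  have H_step: "\<rho> t = H t - \<gamma> * H (Suc t)" if "t < T" for t
  proof -
    have "(\<Sum>i=Suc t..T. \<gamma>^(i-t) * \<rho> i) = \<gamma> * H (Suc t)"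
      unfolding H_def sum_distrib_left
      by (intro sum.cong refl) (auto simp: Suc_diff_Suc[symmetric] simp del: Suc_diff_Suc)
    then show ?thesis
      using that unfolding H_def by (simp add: sum.atLeast_Suc_atMost)
  qed
  have H_T: "H T = 0"
    using assms by (simp add: H_def)
  have tail: "(\<Sum>t\<in>{1..<T}. H t) = (\<Sum>t<k. H (Suc t))"
    using Suc by (simp add: sum.atLeast_Suc_lessThan_Suc_shift[of _ 0, simplified] atLeast0LessThan)
  have sum_H: "(\<Sum>t<T. H t) = H 0 + (\<Sum>t<k. H (Suc t))"
    using Suc by (simp only: sum.lessThan_Suc_shift)
  have sum_H_Suc: "(\<Sum>t<T. H (Suc t)) = (\<Sum>t<k. H (Suc t))"
    using Suc H_T by simp
  have "(\<Sum>t<T. \<rho> t) = (\<Sum>t<T. H t - \<gamma> * H (Suc t))"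
    by (rule sum.cong) (simp_all add: H_step)
  also have "\<dots> = (\<Sum>t<T. H t) - \<gamma> * (\<Sum>t<T. H (Suc t))"
    by (simp add: sum_subtractf sum_distrib_left)
  also have "\<dots> = H 0 + (1 - \<gamma>) * (\<Sum>t\<in>{1..<T}. H t)"
    unfolding tail sum_H sum_H_Suc by (simp add: algebra_simps)
  finally show ?thesis by (simp add: H_def)
qed

lemma traj_prob_Suc:
  "traj_prob d0 P pol (Suc t) ss as =
     traj_prob d0 P pol t ss as * (pol (ss t) (as t) * P (ss t) (as t) (ss (Suc t)))"
  unfolding traj_prob_def by (simp add: mult.assoc)

lemma traj_prob_fun_upd_future:
  "traj_prob d0 P pol t (ss(Suc t := y)) (as(t := a)) = traj_prob d0 P pol t ss as"
  unfolding traj_prob_def by (intro arg_cong2[where f = "(*)"] prod.cong) auto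

lemma traj_expect_0:
  fixes d0 :: "'s::finite \<Rightarrow> real"
  shows "traj_expect d0 P pol 0 g = (\<Sum>s\<in>UNIV. d0 s * g ((\<lambda>_. undefined)(0 := s)) (\<lambda>_. undefined))"
  unfolding traj_expect_def traj_prob_def atMost_0
  by (simp add: sum_PiE_UNIV_insert[of 0 "{}", simplified])

lemma traj_expect_diff:
  "traj_expect d0 P pol t (\<lambda>ss as. f ss as - g ss as) = traj_expect d0 P pol t f - traj_expect d0 P pol t g"
  unfolding traj_expect_def by (simp add: right_diff_distrib sum_subtractf)

lemma traj_expect_cmult:
  "traj_expect d0 P pol t (\<lambda>ss as. c * f ss as) = c * traj_expect d0 P pol t f"
  unfolding traj_expect_def by (simp add: sum_distrib_left mult_ac)

lemma traj_expect_sum: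
  "traj_expect d0 P pol t (\<lambda>ss as. \<Sum>k\<in>K. f k ss as) = (\<Sum>k\<in>K. traj_expect d0 P pol t (f k))"
  unfolding traj_expect_def sum_distrib_left
  by (simp add: sum.swap[of _ K])

definition prefix_determined :: "nat \<Rightarrow> ((nat \<Rightarrow> 's) \<Rightarrow> (nat \<Rightarrow> 'a) \<Rightarrow> real) \<Rightarrow> bool" where
  "prefix_determined t g \<longleftrightarrow>
     (\<forall>ss as j y. t < j \<longrightarrow> g (ss(j := y)) as = g ss as) \<and>
     (\<forall>ss as j a. t \<le> j \<longrightarrow> g ss (as(j := a)) = g ss as)"

lemma prefix_determined_mono: "prefix_determined t g \<Longrightarrow> t \<le> m \<Longrightarrow> prefix_determined m g"
  unfolding prefix_determined_def by auto

definition expected_reward :: "('s \<Rightarrow> real) \<Rightarrow> ('s \<Rightarrow> 'a \<Rightarrow> 's \<Rightarrow> real) \<Rightarrow> ('s \<Rightarrow> 'a \<Rightarrow> 's \<Rightarrow> real pmf)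
    \<Rightarrow> ('s \<Rightarrow> 'a \<Rightarrow> real) \<Rightarrow> nat \<Rightarrow> real" where
  "expected_reward d0 P R pol i =
     traj_expect d0 P pol (Suc i) (\<lambda>ss as. mean_reward R (ss i) (as i) (ss (Suc i)))"

definition discounted_return :: "('s \<Rightarrow> 'a \<Rightarrow> 's \<Rightarrow> real pmf) \<Rightarrow> nat \<Rightarrow> real \<Rightarrow> nat
    \<Rightarrow> (nat \<Rightarrow> 's) \<Rightarrow> (nat \<Rightarrow> 'a) \<Rightarrow> real" where
  "discounted_return R T \<gamma> t ss as = (\<Sum>i=t..T. \<gamma>^(i-t) * mean_reward R (ss i) (as i) (ss (Suc i)))"

locale finite_mdp =
  fixes d0 :: "'s::finite \<Rightarrow> real" and P :: "'s \<Rightarrow> 'a::finite \<Rightarrow> 's \<Rightarrow> real"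
    and pol :: "'s \<Rightarrow> 'a \<Rightarrow> real"
  assumes d0_nonneg: "\<And>s. d0 s \<ge> 0" and d0_sum: "(\<Sum>s\<in>UNIV. d0 s) = 1"
    and P_nonneg: "\<And>s a s'. P s a s' \<ge> 0" and P_sum: "\<And>s a. (\<Sum>s'\<in>UNIV. P s a s') = 1"
    and pol_nonneg: "\<And>s a. pol s a \<ge> 0" and pol_sum: "\<And>s. (\<Sum>a\<in>UNIV. pol s a) = 1"
begin

lemma traj_prob_nonneg: "traj_prob d0 P pol t ss as \<ge> 0"
  unfolding traj_prob_def by (simp add: d0_nonneg P_nonneg pol_nonneg prod_nonneg)

lemma traj_expect_nonneg:
  assumes "\<And>ss as. f ss as \<ge> 0"
  shows "traj_expect d0 P pol t f \<ge> 0"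
  unfolding traj_expect_def by (simp add: assms traj_prob_nonneg sum_nonneg)

lemma state_prob_nonneg: "state_prob d0 P pol t s \<ge> 0"
  unfolding state_prob_def by (rule traj_expect_nonneg) simp

lemma traj_expect_mult_eq_0:
  assumes f_nonneg: "\<And>ss as. f ss as \<ge> 0" and f_null: "traj_expect d0 P pol t f = 0"
  shows "traj_expect d0 P pol t (\<lambda>ss as. f ss as * h ss as) = 0"
proof -
  let ?SS = "PiE {..t} (\<lambda>_. UNIV :: 's set)" and ?AS = "PiE {..<t} (\<lambda>_. UNIV :: 'a set)"
  have nonneg: "traj_prob d0 P pol t ss as * f ss as \<ge> 0" for ss as
    by (simp add: f_nonneg traj_prob_nonneg)
  have "\<forall>ss\<in>?SS. \<forall>as\<in>?AS. traj_prob d0 P pol t ss as * f ss as = 0"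
    using f_null unfolding traj_expect_def
    by (simp add: sum_nonneg_eq_0_iff sum_nonneg nonneg finite_PiE)
  then show ?thesis
    unfolding traj_expect_def by (intro sum.neutral ballI) (metis mult.assoc mult_zero_left)
qed

lemma traj_expect_Suc_prefix:
  assumes "prefix_determined t g"
  shows "traj_expect d0 P pol (Suc t) g = traj_expect d0 P pol t g"
proof -
  have g_upd: "g (ss(Suc t := y)) (as(t := a)) = g ss as" for ss as y a
    using assms unfolding prefix_determined_def by (metis le_refl lessI)
  have kernel: "(\<Sum>y\<in>UNIV. \<Sum>a\<in>UNIV. pol s a * P s a y) = 1" for s
  proof -
    have "(\<Sum>y\<in>UNIV. \<Sum>a\<in>UNIV. pol s a * P s a y) = (\<Sum>a\<in>UNIV. pol s a * (\<Sum>y\<in>UNIV. P s a y))"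
      by (subst sum.swap) (simp add: sum_distrib_left)
    then show ?thesis by (simp add: P_sum pol_sum)
  qed
  have "traj_expect d0 P pol (Suc t) g =
    (\<Sum>ss\<in>PiE {..t} (\<lambda>_. UNIV). \<Sum>y\<in>UNIV. \<Sum>as\<in>PiE {..<t} (\<lambda>_. UNIV). \<Sum>a\<in>UNIV.
       (traj_prob d0 P pol t ss as * g ss as) * (pol (ss t) a * P (ss t) a y))"
    unfolding traj_expect_def atMost_Suc lessThan_Suc
    by (simp add: sum_PiE_UNIV_insert traj_prob_Suc traj_prob_fun_upd_future g_upd mult_ac)
  also have "\<dots> = (\<Sum>ss\<in>PiE {..t} (\<lambda>_. UNIV). \<Sum>as\<in>PiE {..<t} (\<lambda>_. UNIV).
       (traj_prob d0 P pol t ss as * g ss as) * (\<Sum>y\<in>UNIV. \<Sum>a\<in>UNIV. pol (ss t) a * P (ss t) a y))"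
    by (intro sum.cong refl, subst sum.swap) (simp add: sum_distrib_left)
  also have "\<dots> = traj_expect d0 P pol t g"
    unfolding traj_expect_def kernel by simp
  finally show ?thesis .
qed

lemma traj_expect_prefix:
  assumes "prefix_determined t g" "t \<le> m"
  shows "traj_expect d0 P pol m g = traj_expect d0 P pol t g"
  using assms(2)
proof (induction m rule: dec_induct)
  case (step m)
  then show ?case
    using traj_expect_Suc_prefix[OF prefix_determined_mono[OF assms(1) step(1)]] by simp
qed simp

lemma traj_expect_one: "traj_expect d0 P pol t (\<lambda>_ _. 1) = 1"
proof -
  have "traj_expect d0 P pol t (\<lambda>_ _. 1) = traj_expect d0 P pol 0 (\<lambda>_ _. 1)"
    by (rule traj_expect_prefix) (auto simp: prefix_determined_def)
  then show ?thesis by (simp add: traj_expect_0 d0_sum)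
qed

lemma state_prob_0: "state_prob d0 P pol 0 s = d0 s"
  unfolding state_prob_def traj_expect_0 by (simp add: if_distrib cong: if_cong)

lemma traj_expect_reward_eq_expected_reward:
  assumes "i \<le> T"
  shows "traj_expect d0 P pol (Suc T) (\<lambda>ss as. mean_reward R (ss i) (as i) (ss (Suc i))) =
    expected_reward d0 P R pol i"
  unfolding expected_reward_def
  by (rule traj_expect_prefix) (use assms in \<open>auto simp: prefix_determined_def\<close>)

lemma expected_reward_horizon_eq_0:
  assumes horizon: "state_prob d0 P pol T tm = 1"
    and tm_reward: "\<And>a s'. R tm a s' = return_pmf 0"
  shows "expected_reward d0 P R pol T = 0"
proof -
  let ?off = "\<lambda>ss (as :: nat \<Rightarrow> 'a). 1 - (if ss T = tm then 1 else 0 :: real)"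
  let ?r = "\<lambda>ss as. mean_reward R (ss T) (as T) (ss (Suc T))"
  have "traj_expect d0 P pol T ?off = 0"
    using horizon by (simp add: traj_expect_diff traj_expect_one state_prob_def)
  then have "traj_expect d0 P pol (Suc T) ?off = 0"
    by (subst traj_expect_prefix) (auto simp: prefix_determined_def)
  then have "traj_expect d0 P pol (Suc T) (\<lambda>ss as. ?off ss as * ?r ss as) = 0"
    using traj_expect_mult_eq_0 by simp
  moreover have "(\<lambda>ss as. ?off ss as * ?r ss as) = ?r"
    by (intro ext) (simp add: mean_reward_def tm_reward)
  ultimately show ?thesis
    unfolding expected_reward_def by simp
qed

text \<open>This also holds where \<open>state_prob d0 P pol t s = 0\<close>: there \<open>cond_return\<close> is the junk
  value of a division by zero and both sides vanish.\<close>
lemma state_prob_mult_cond_return: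
  assumes "t \<le> T"
  shows "state_prob d0 P pol t s * cond_return d0 P R pol T \<gamma> t s =
    traj_expect d0 P pol (Suc T) (\<lambda>ss as. (if ss t = s then 1 else 0) * discounted_return R T \<gamma> t ss as)"
proof (cases "state_prob d0 P pol t s = 0")
  case True
  have "traj_expect d0 P pol (Suc T) (\<lambda>ss as. if ss t = s then 1 else 0) = state_prob d0 P pol t s"
    unfolding state_prob_def
    by (rule traj_expect_prefix) (use assms in \<open>auto simp: prefix_determined_def\<close>)
  with True show ?thesis
    using traj_expect_mult_eq_0 by simp
next
  case False
  then show ?thesis
    unfolding cond_return_def discounted_return_def by simp
qed

lemma sum_state_prob_mult_cond_return:
  assumes "t \<le> T"
  shows "(\<Sum>s\<in>UNIV. state_prob d0 P pol t s * cond_return d0 P R pol T \<gamma> t s) =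
    (\<Sum>i=t..T. \<gamma>^(i-t) * expected_reward d0 P R pol i)"
proof -
  have "(\<Sum>s\<in>UNIV. state_prob d0 P pol t s * cond_return d0 P R pol T \<gamma> t s) =
      traj_expect d0 P pol (Suc T) (\<lambda>ss as. \<Sum>s\<in>UNIV. (if ss t = s then 1 else 0) * discounted_return R T \<gamma> t ss as)"
    by (simp add: state_prob_mult_cond_return[OF assms] traj_expect_sum)
  also have "\<dots> = traj_expect d0 P pol (Suc T) (discounted_return R T \<gamma> t)"
    by (simp add: sum_distrib_right[symmetric])
  also have "\<dots> = (\<Sum>i=t..T. \<gamma>^(i-t) * expected_reward d0 P R pol i)"
    using assms unfolding discounted_return_def
    by (simp add: traj_expect_sum traj_expect_cmult traj_expect_reward_eq_expected_reward)
  finally show ?thesis .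
qed

lemma objective_eq_sum_disc_visit_mult:
  assumes horizon: "state_prob d0 P pol T tm = 1"
    and tm_reward: "\<And>a s'. R tm a s' = return_pmf 0"
    and V_cond: "\<And>t s. t \<le> T \<Longrightarrow> state_prob d0 P pol t s > 0 \<Longrightarrow> V s = cond_return d0 P R pol T \<gamma> t s"
  shows "objective d0 P R pol T = (\<Sum>s\<in>UNIV. disc_visit d0 P pol T \<gamma> s * V s)"
proof -
  define H where "H t = (\<Sum>s\<in>UNIV. state_prob d0 P pol t s * V s)" for t
  have H_eq: "H t = (\<Sum>i=t..T. \<gamma>^(i-t) * expected_reward d0 P R pol i)" if "t \<le> T" for t
  proof -
    have "state_prob d0 P pol t s * V s = state_prob d0 P pol t s * cond_return d0 P R pol T \<gamma> t s" for s
      using V_cond[OF that, of s] state_prob_nonneg[of t s] by fastforce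
    then show ?thesis
      unfolding H_def by (simp only: sum_state_prob_mult_cond_return[OF that])
  qed
  have H_0: "(\<Sum>s\<in>UNIV. d0 s * V s) = H 0"
    unfolding H_def by (simp add: state_prob_0)
  have H_tail: "(\<Sum>s\<in>UNIV. \<Sum>t\<in>{1..<T}. state_prob d0 P pol t s * V s) = (\<Sum>t\<in>{1..<T}. H t)"
    unfolding H_def by (rule sum.swap)
  have "(\<Sum>s\<in>UNIV. disc_visit d0 P pol T \<gamma> s * V s) = H 0 + (1 - \<gamma>) * (\<Sum>t\<in>{1..<T}. H t)"
    unfolding disc_visit_def H_0[symmetric] H_tail[symmetric]
    by (simp add: distrib_right sum.distrib sum_distrib_left sum_distrib_right mult.assoc)
  also have "\<dots> = (\<Sum>i=0..T. \<gamma>^i * expected_reward d0 P R pol i) +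
      (1 - \<gamma>) * (\<Sum>t\<in>{1..<T}. \<Sum>i=t..T. \<gamma>^(i-t) * expected_reward d0 P R pol i)"
    using H_eq[of 0] sum.cong[OF refl H_eq, of "{1..<T}" "\<lambda>t. t"] by simp
  also have "\<dots> = objective d0 P R pol T"
    unfolding sum_discounted_tails[where \<rho> = "expected_reward d0 P R pol",
        OF expected_reward_horizon_eq_0[of T tm R, OF horizon tm_reward]]
    by (simp add: objective_def expected_reward_def)
  finally show ?thesis ..
qed

end

lemma disc_visit_differentiable:
  fixes \<pi> :: "'x::real_normed_vector \<Rightarrow> 's::finite \<Rightarrow> 'a::finite \<Rightarrow> real"
  assumes "\<And>s a. (\<lambda>x. \<pi> x s a) differentiable (at \<theta>)"
  shows "(\<lambda>x. disc_visit d0 P (\<pi> x) T \<gamma> s) differentiable (at \<theta>)"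
  unfolding disc_visit_def state_prob_def traj_expect_def traj_prob_def
  using assms
  by (intro differentiable_add differentiable_mult differentiable_const differentiable_sum
      differentiable_prod finite_PiE ballI) auto

theorem corollary1:
  fixes d0 :: "'s::finite \<Rightarrow> real"
    and P :: "'s \<Rightarrow> 'a::finite \<Rightarrow> 's \<Rightarrow> real"
    and R :: "'s \<Rightarrow> 'a \<Rightarrow> 's \<Rightarrow> real pmf"
    and Rmax :: real and tm :: 's and T :: nat
    and \<pi> :: "real^'n \<Rightarrow> 's \<Rightarrow> 'a \<Rightarrow> real"
    and V :: "real^'n \<Rightarrow> 's \<Rightarrow> real"
    and \<gamma> :: real and \<theta> :: "real^'n"
  assumes d0_nonneg: "\<forall>s. d0 s \<ge> 0" and d0_sum: "(\<Sum>s\<in>UNIV. d0 s) = 1"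
    and P_nonneg: "\<forall>s a s'. P s a s' \<ge> 0" and P_sum: "\<forall>s a. (\<Sum>s'\<in>UNIV. P s a s') = 1"
    and R_bounded: "\<forall>s a s'. set_pmf (R s a s') \<subseteq> {-Rmax..Rmax}"
    and tm_absorbing: "\<forall>a. P tm a tm = 1"
    and tm_reward: "\<forall>a s'. R tm a s' = return_pmf 0"
    and pol_nonneg: "\<forall>x s a. \<pi> x s a \<ge> 0"
    and pol_sum: "\<forall>x s. (\<Sum>a\<in>UNIV. \<pi> x s a) = 1"
    and pol_diff: "\<forall>s a x. (\<lambda>y. \<pi> y s a) differentiable (at x)"
    and horizon: "\<forall>x. state_prob d0 P (\<pi> x) T tm = 1"
    and gamma: "0 \<le> \<gamma>" "\<gamma> \<le> 1"
    and V_cond: "\<forall>x t s. t \<le> T \<longrightarrow> state_prob d0 P (\<pi> x) t s > 0 \<longrightarrow>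
                   V x s = cond_return d0 P R (\<pi> x) T \<gamma> t s"
    and V_tm: "\<forall>x. V x tm = 0"
    and V_diff: "\<forall>s. (\<lambda>x. V x s) differentiable (at \<theta>)"
  shows "(\<forall>s. (\<lambda>x. disc_visit d0 P (\<pi> x) T \<gamma> s) differentiable (at \<theta>)) \<and>
         ((\<lambda>x. objective d0 P R (\<pi> x) T) has_derivative
           (\<lambda>h. (\<Sum>s\<in>UNIV. disc_visit d0 P (\<pi> \<theta>) T \<gamma> s * frechet_derivative (\<lambda>x. V x s) (at \<theta>) h)
              + (\<Sum>s\<in>UNIV. V \<theta> s * frechet_derivative (\<lambda>x. disc_visit d0 P (\<pi> x) T \<gamma> s) (at \<theta>) h)))
          (at \<theta>)"
proof -
  have mdp: "finite_mdp d0 P (\<pi> x)" for x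
    using d0_nonneg d0_sum P_nonneg P_sum pol_nonneg pol_sum by unfold_locales auto
  have objective_eq: "objective d0 P R (\<pi> x) T = (\<Sum>s\<in>UNIV. disc_visit d0 P (\<pi> x) T \<gamma> s * V x s)" for x
    by (rule finite_mdp.objective_eq_sum_disc_visit_mult[OF mdp, where tm = tm])
      (use horizon tm_reward V_cond in auto)
  have visit_diff: "(\<lambda>x. disc_visit d0 P (\<pi> x) T \<gamma> s) differentiable (at \<theta>)" for s
    using pol_diff by (intro disc_visit_differentiable) auto
  have "((\<lambda>x. \<Sum>s\<in>UNIV. disc_visit d0 P (\<pi> x) T \<gamma> s * V x s) has_derivative
      (\<lambda>h. \<Sum>s\<in>UNIV. disc_visit d0 P (\<pi> \<theta>) T \<gamma> s * frechet_derivative (\<lambda>x. V x s) (at \<theta>) h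
          + frechet_derivative (\<lambda>x. disc_visit d0 P (\<pi> x) T \<gamma> s) (at \<theta>) h * V \<theta> s)) (at \<theta>)"
    using visit_diff V_diff
    by (intro has_derivative_sum has_derivative_mult) (auto simp: frechet_derivative_works)
  then show ?thesis
    unfolding objective_eq using visit_diff by (simp add: sum.distrib mult.commute)
qed

end
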